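(* Consider the sparse sequence model and the weights $\phi_i$ described in the context, with $\lambda_n = O(n^{-(a+1)})$ as $n\to\infty$ for a constant $a>0$, and with $\alpha<2T$. Writing $S^\star = S_{\theta^\star}$, \[ \sum_{i=1}^n \mathsf{E}_{\theta_i^\star}\phi_i \le |S^\star| + o(1) \lesssim |S^\star|, \] where the $o(1)$ term is bounded by a quantity not depending on $\theta^\star$ that tends to $0$ as $n\to\infty$.
   Context: Model: one observes $Y_i = \theta_i + Z_i$, $i=1,\ldots,n$, where $\theta\in\mathbb{R}^n$ is unknown and $Z_1,\ldots,Z_n$ are iid copies of a random variable $Z$ with fully known distribution, mean zero, and subgaussian in the sense that $\mathsf{E}\exp(tZ) \le \exp(\sigma^2 t^2/2)$ for all $t\in\mathbb{R}$, for a known constant $\sigma>0$. $T>0$ denotes the upper endpoint of the interval on which the moment generating function of $(Z/\sigma)^2$ exists, i.e. $\mathsf{E} e^{t (Z/\sigma)^2}$ is finite (bounded by a constant) for $t\in(0,T]$. $\mathsf{E}_{\theta_i^\star}$ denotes expectation when $Y_i$ has mean $\theta_i^\star$. For $\theta\in\mathbb{R}^n$, $S_\theta=\{i:\theta_i\neq 0\}$. Weights: fix constants $\alpha\in(0,1)$, $\gamma>0$ and a sequence $\lambda_n\in(0,1)$, and define $\phi_i\in(0,1)$ by $\operatorname{logit}(\phi_i) = \operatorname{logit}(\lambda_n) + \tfrac12\log\tfrac{\gamma}{\alpha+\gamma} + \tfrac{\alpha}{2\sigma^2} Y_i^2$, with $\operatorname{logit}(p)=\log\{p/(1-p)\}$.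 *)

theory Defs
  imports "HOL-Probability.Probability" "HOL-Library.Landau_Symbols"
begin

definition logit :: "real \<Rightarrow> real" where
  "logit p = ln (p / (1 - p))"

definition expit :: "real \<Rightarrow> real" where
  "expit x = 1 / (1 + exp (- x))"

definition phi_weight :: "real \<Rightarrow> real \<Rightarrow> real \<Rightarrow> real \<Rightarrow> real \<Rightarrow> real" where
  "phi_weight \<sigma> \<alpha> \<gamma> lam y =
     expit (logit lam + ln (\<gamma> / (\<alpha> + \<gamma>)) / 2 + \<alpha> / (2 * \<sigma>\<^sup>2) * y\<^sup>2)"

text \<open>E_{theta_i}(phi_i) where Y_i = theta_i + Z, Z distributed according to D.\<close>
definition expected_phi ::
  "real measure \<Rightarrow> real \<Rightarrow> real \<Rightarrow> real \<Rightarrow> real \<Rightarrow> real \<Rightarrow> real" where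
  "expected_phi D \<sigma> \<alpha> \<gamma> lam \<theta>i =
     integral\<^sup>L D (\<lambda>z. phi_weight \<sigma> \<alpha> \<gamma> lam (\<theta>i + z))"

end

theory Submission
  imports Defs "HOL-Real_Asymp.Real_Asymp"
begin

text \<open>
  On the support of \<open>\<theta>\<^sup>\<star>\<close> bound \<open>\<phi>\<^sub>i \<le> 1\<close>. Off the support \<open>Y\<^sub>i = Z\<^sub>i\<close>, and
  \<open>expit x \<le> e\<^sup>x\<close> gives
  \<open>\<phi>\<^sub>i \<le> \<lambda>/(1-\<lambda>) \<cdot> sqrt (\<gamma>/(\<alpha>+\<gamma>)) \<cdot> exp (\<alpha>/2 \<cdot> (Z\<^sub>i/\<sigma>)\<^sup>2)\<close>, whose expectation is
  finite because \<open>\<alpha>/2 < T\<close>. Summing over at most \<open>n\<close> null coordinates leaves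
  \<open>O(n \<lambda>\<^sub>n) = O(n\<^sup>-\<^sup>a) \<rightarrow> 0\<close>, uniformly in \<open>\<theta>\<^sup>\<star>\<close>.
\<close>

lemma expit_pos: "0 < expit x"
  by (simp add: expit_def add_pos_pos)

lemma expit_less_one: "expit x < 1"
  by (simp add: expit_def add_pos_pos divide_less_eq)

lemma expit_le_exp: "expit x \<le> exp x"
proof -
  have "1 / (1 + exp (- x)) \<le> 1 / exp (- x)"
    by (rule divide_left_mono) (auto simp: add_pos_pos)
  also have "1 / exp (- x) = exp x"
    by (simp add: exp_minus field_simps)
  finally show ?thesis
    by (simp add: expit_def)
qed

lemma exp_logit: "0 < p \<Longrightarrow> p < 1 \<Longrightarrow> exp (logit p) = p / (1 - p)"
  by (simp add: logit_def)

lemma phi_weight_le_one: "phi_weight \<sigma> \<alpha> \<gamma> lam y \<le> 1"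
  using expit_less_one by (simp add: phi_weight_def less_imp_le)

lemma phi_weight_le_exp_square:
  assumes "0 < lam" "lam < 1" "0 < \<alpha>" "0 < \<gamma>"
  shows "phi_weight \<sigma> \<alpha> \<gamma> lam y
           \<le> lam / (1 - lam) * sqrt (\<gamma> / (\<alpha> + \<gamma>)) * exp (\<alpha> / 2 * (y / \<sigma>)\<^sup>2)"
proof -
  have "phi_weight \<sigma> \<alpha> \<gamma> lam y
          \<le> exp (logit lam + ln (\<gamma> / (\<alpha> + \<gamma>)) / 2 + \<alpha> / (2 * \<sigma>\<^sup>2) * y\<^sup>2)"
    unfolding phi_weight_def by (rule expit_le_exp)
  also have "\<dots> = exp (logit lam) * exp (ln (\<gamma> / (\<alpha> + \<gamma>)) / 2) * exp (\<alpha> / (2 * \<sigma>\<^sup>2) * y\<^sup>2)"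
    by (simp add: exp_add)
  also have "exp (ln (\<gamma> / (\<alpha> + \<gamma>)) / 2) = sqrt (\<gamma> / (\<alpha> + \<gamma>))"
    using assms by (simp add: powr_def powr_half_sqrt[symmetric])
  also have "\<alpha> / (2 * \<sigma>\<^sup>2) * y\<^sup>2 = \<alpha> / 2 * (y / \<sigma>)\<^sup>2"
    by (simp add: power_divide)
  finally show ?thesis
    using assms by (simp add: exp_logit)
qed

context
  fixes D :: "real measure"
  assumes D_prob: "prob_space D" and D_borel: "sets D = sets borel"
begin

interpretation D: prob_space D
  by (rule D_prob)

lemma integrable_phi_weight: "integrable D (\<lambda>z. phi_weight \<sigma> \<alpha> \<gamma> lam (t + z))"
proof (rule D.integrable_const_bound[where B = 1])
  show "AE z in D. norm (phi_weight \<sigma> \<alpha> \<gamma> lam (t + z)) \<le> 1"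
    using expit_pos expit_less_one by (auto simp: phi_weight_def less_imp_le)
  show "(\<lambda>z. phi_weight \<sigma> \<alpha> \<gamma> lam (t + z)) \<in> borel_measurable D"
    unfolding measurable_cong_sets[OF D_borel refl] phi_weight_def expit_def by measurable
qed

lemma expected_phi_le_one: "expected_phi D \<sigma> \<alpha> \<gamma> lam t \<le> 1"
proof -
  have "expected_phi D \<sigma> \<alpha> \<gamma> lam t \<le> (\<integral>z. 1 \<partial>D)"
    unfolding expected_phi_def
    by (rule integral_mono[OF integrable_phi_weight]) (simp_all add: phi_weight_le_one)
  then show ?thesis
    by (simp add: D.prob_space)
qed

lemma expected_phi_zero_le:
  assumes "0 < lam" "lam < 1" "0 < \<alpha>" "0 < \<gamma>"
    and "integrable D (\<lambda>z. exp (\<alpha> / 2 * (z / \<sigma>)\<^sup>2))"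
  shows "expected_phi D \<sigma> \<alpha> \<gamma> lam 0
           \<le> lam / (1 - lam) * sqrt (\<gamma> / (\<alpha> + \<gamma>)) * (\<integral>z. exp (\<alpha> / 2 * (z / \<sigma>)\<^sup>2) \<partial>D)"
proof -
  have "expected_phi D \<sigma> \<alpha> \<gamma> lam 0
          \<le> (\<integral>z. lam / (1 - lam) * sqrt (\<gamma> / (\<alpha> + \<gamma>)) * exp (\<alpha> / 2 * (z / \<sigma>)\<^sup>2) \<partial>D)"
    unfolding expected_phi_def
    by (intro integral_mono integrable_phi_weight integrable_mult_right assms)
       (use phi_weight_le_exp_square[OF assms(1-4)] in simp)
  then show ?thesis
    by simp
qed

end

lemma sum_le_card_support_plus:
  fixes f :: "real \<Rightarrow> real" and \<theta> :: "nat \<Rightarrow> real"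
  assumes "\<And>t. f t \<le> 1" and "f 0 \<le> b" and "0 \<le> b"
  shows "(\<Sum>i<n. f (\<theta> i)) \<le> real (card {i. i < n \<and> \<theta> i \<noteq> 0}) + real n * b"
proof -
  define S where "S = {i. i < n \<and> \<theta> i \<noteq> 0}"
  define N where "N = {i. i < n \<and> \<theta> i = 0}"
  have "{..<n} = S \<union> N" and "S \<inter> N = {}" and "finite S" and "finite N"
    unfolding S_def N_def by auto
  then have "(\<Sum>i<n. f (\<theta> i)) = (\<Sum>i\<in>S. f (\<theta> i)) + (\<Sum>i\<in>N. f (\<theta> i))"
    by (simp add: sum.union_disjoint)
  also have "(\<Sum>i\<in>S. f (\<theta> i)) \<le> (\<Sum>i\<in>S. 1)"
    by (intro sum_mono assms(1))
  also have "(\<Sum>i\<in>N. f (\<theta> i)) \<le> (\<Sum>i\<in>N. b)"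
    by (intro sum_mono) (simp add: N_def assms(2))
  also have "(\<Sum>i\<in>N. b) \<le> real n * b"
  proof -
    have "card N \<le> card {..<n}"
      unfolding N_def by (intro card_mono) auto
    then show ?thesis
      using \<open>0 \<le> b\<close> by (simp add: mult_right_mono)
  qed
  finally show ?thesis
    by (simp add: S_def)
qed

lemma tendsto_n_times_odds:
  fixes lam :: "nat \<Rightarrow> real"
  assumes "lam \<in> O(\<lambda>n. real n powr (- (a + 1)))" and "a > 0"
  shows "(\<lambda>n. real n * (lam n / (1 - lam n))) \<longlonglongrightarrow> 0"
proof -
  have "(\<lambda>n. real n powr (- (a + 1))) \<in> o(\<lambda>_. 1)"
    and "(\<lambda>n. real n * real n powr (- (a + 1))) \<in> o(\<lambda>_. 1)"
    using \<open>a > 0\<close> by real_asymp+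
  then have "lam \<in> o(\<lambda>_. 1)" and "(\<lambda>n. real n * lam n) \<in> o(\<lambda>_. 1)"
    using assms(1) by (auto intro: landau_o.big_small_trans landau_o.big.mult_left)
  then have "lam \<longlonglongrightarrow> 0" and "(\<lambda>n. real n * lam n) \<longlonglongrightarrow> 0"
    by (auto dest: smalloD_tendsto)
  then have "(\<lambda>n. real n * lam n / (1 - lam n)) \<longlonglongrightarrow> 0 / (1 - 0)"
    by (intro tendsto_intros) auto
  then show ?thesis
    by simp
qed

theorem lemma1:
  fixes D :: "real measure" and \<sigma> T \<alpha> \<gamma> a :: real and lam :: "nat \<Rightarrow> real"
  assumes D_prob: "prob_space D" and D_borel: "sets D = sets borel"
    and mean0: "integrable D (\<lambda>z. z)" "(\<integral>z. z \<partial>D) = 0"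
    and \<sigma>_pos: "\<sigma> > 0"
    and subgauss: "\<forall>t::real. integrable D (\<lambda>z. exp (t * z))
                      \<and> (\<integral>z. exp (t * z) \<partial>D) \<le> exp (\<sigma>\<^sup>2 * t\<^sup>2 / 2)"
    and T_pos: "T > 0"
    and mgf_sq: "\<forall>t\<in>{0<..T}. integrable D (\<lambda>z. exp (t * (z / \<sigma>)\<^sup>2))"
    and \<alpha>_range: "0 < \<alpha>" "\<alpha> < 1" and \<alpha>_T: "\<alpha> < 2 * T"
    and \<gamma>_pos: "\<gamma> > 0"
    and lam_range: "\<forall>n. 0 < lam n \<and> lam n < 1"
    and a_pos: "a > 0"
    and lam_rate: "lam \<in> O(\<lambda>n. real n powr (- (a + 1)))"
  shows "\<exists>\<epsilon> :: nat \<Rightarrow> real. \<epsilon> \<longlonglongrightarrow> 0 \<and>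
           (\<forall>n. \<forall>\<theta> :: nat \<Rightarrow> real.
              (\<Sum>i<n. expected_phi D \<sigma> \<alpha> \<gamma> (lam n) (\<theta> i))
                \<le> real (card {i. i < n \<and> \<theta> i \<noteq> 0}) + \<epsilon> n)"
proof -
  define K where "K = sqrt (\<gamma> / (\<alpha> + \<gamma>)) * (\<integral>z. exp (\<alpha> / 2 * (z / \<sigma>)\<^sup>2) \<partial>D)"
  define odds where "odds n = lam n / (1 - lam n)" for n
  have "\<alpha> / 2 \<in> {0<..T}"
    using \<alpha>_range \<alpha>_T by simp
  then have "integrable D (\<lambda>z. exp (\<alpha> / 2 * (z / \<sigma>)\<^sup>2))"
    using mgf_sq by blast
  then have null_bound: "expected_phi D \<sigma> \<alpha> \<gamma> (lam n) 0 \<le> odds n * K" for n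
    using expected_phi_zero_le[OF D_prob D_borel] lam_range \<alpha>_range \<gamma>_pos
    by (simp add: K_def odds_def mult.assoc)
  have "0 \<le> odds n * K" for n
    using lam_range[rule_format, of n] \<alpha>_range \<gamma>_pos unfolding K_def odds_def
    by (intro mult_nonneg_nonneg divide_nonneg_nonneg integral_nonneg_AE) auto
  then have "(\<Sum>i<n. expected_phi D \<sigma> \<alpha> \<gamma> (lam n) (\<theta> i))
               \<le> real (card {i. i < n \<and> \<theta> i \<noteq> 0}) + real n * (odds n * K)" for n \<theta>
    by (intro sum_le_card_support_plus expected_phi_le_one[OF D_prob D_borel] null_bound)
  moreover have "(\<lambda>n. real n * odds n * K) \<longlonglongrightarrow> 0 * K"
    unfolding odds_def by (intro tendsto_mult_right tendsto_n_times_odds[OF lam_rate a_pos])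
  ultimately show ?thesis
    by (intro exI[of _ "\<lambda>n. real n * odds n * K"]) (simp add: mult.assoc)
qed

end
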